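(* Let $G$ be a group, $n\ge1$, $\phi_1,\dots,\phi_n\in\operatorname{End}(G)$ and $\sigma\in S_n$. Let $\phi$ be the endomorphism of $G^n$ given by $\phi(g_1,\dots,g_n)=(\phi_1(g_{\sigma(1)}),\dots,\phi_n(g_{\sigma(n)}))$. Write the disjoint cycle decomposition of $\sigma$, including cycles of length one, as $\sigma=(c_1\,\dots\,c_{n_1})(c_{n_1+1}\,\dots\,c_{n_2})\cdots(c_{n_{k-1}+1}\,\dots\,c_{n_k})$ with $0=n_0<n_1<\dots<n_k=n$, where the cycle $(a_1\,a_2\,\dots\,a_m)$ means $a_1\mapsto a_2\mapsto\cdots\mapsto a_m\mapsto a_1$. Put $\tilde\phi_j=\phi_{c_{n_{j-1}+1}}\circ\phi_{c_{n_{j-1}+2}}\circ\cdots\circ\phi_{c_{n_j}}$. Then $R(\phi)=\prod_{j=1}^kR(\tilde\phi_j)$.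
   Context: For an endomorphism $\psi$ of a group $A$, $x,y\in A$ are $\psi$-conjugate if $x=gy\psi(g)^{-1}$ for some $g\in A$; $R(\psi)\in\mathbb{N}\cup\{\infty\}$ is the number of $\psi$-conjugacy classes, with the convention $a\cdot\infty=\infty$. *)

theory Defs
  imports "HOL-Algebra.Algebra" "HOL-Library.Extended_Nat" "HOL-Combinatorics.Permutations"
begin

definition twisted_conj :: "('a, 'b) monoid_scheme \<Rightarrow> ('a \<Rightarrow> 'a) \<Rightarrow> ('a \<times> 'a) set" where
  "twisted_conj G \<psi> = {(x, y). x \<in> carrier G \<and> y \<in> carrier G \<and>
      (\<exists>g\<in>carrier G. x = g \<otimes>\<^bsub>G\<^esub> y \<otimes>\<^bsub>G\<^esub> inv\<^bsub>G\<^esub> (\<psi> g))}"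

definition reidemeister :: "('a, 'b) monoid_scheme \<Rightarrow> ('a \<Rightarrow> 'a) \<Rightarrow> enat" where
  "reidemeister G \<psi> =
     (if finite (carrier G // twisted_conj G \<psi>) then enat (card (carrier G // twisted_conj G \<psi>))
      else \<infinity>)"

definition twisted_perm_endo :: "nat \<Rightarrow> (nat \<Rightarrow> 'a \<Rightarrow> 'a) \<Rightarrow> (nat \<Rightarrow> nat) \<Rightarrow> (nat \<Rightarrow> 'a) \<Rightarrow> (nat \<Rightarrow> 'a)" where
  "twisted_perm_endo n \<phi> \<sigma> g = (\<lambda>i\<in>{0..<n}. \<phi> i (g (\<sigma> i)))"

definition block_comp :: "(nat \<Rightarrow> 'a \<Rightarrow> 'a) \<Rightarrow> (nat \<Rightarrow> nat) \<Rightarrow> nat \<Rightarrow> nat \<Rightarrow> 'a \<Rightarrow> 'a" where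
  "block_comp \<phi> c a b = foldr (\<circ>) (map (\<lambda>p. \<phi> (c p)) [a..<b]) id"

end

theory Submission
  imports Defs
begin

text \<open>
  Write a cycle of \<sigma> as c a \<mapsto> c (a+1) \<mapsto> ... \<mapsto> c (b-1) \<mapsto> c a and put
  \<Psi> q = \<phi> (c a) \<circ> ... \<circ> \<phi> (c (q-1)), so that \<Psi> b is the block composite of the theorem.
  The cycle contributes the coordinate x \<mapsto> \<Psi> a (x (c a)) \<cdot> ... \<cdot> \<Psi> (b-1) (x (c (b-1)))
  of a map G^n \<rightarrow> G^k, which is onto.
  On the positions of one cycle, a twisted conjugacy x = g y \<phi>(g)\<inverse> in G^n is a chain
  x q = w q \<cdot> y q \<cdot> \<phi> (c q) (w (q+1))\<inverse> with w b = w a, and applying \<Psi> q to the q-th relation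
  makes the products telescope: \<Pi> x = w a \<cdot> \<Pi> y \<cdot> \<Psi> b (w a)\<inverse>.
  Conversely, a witness h of the \<Psi> b-conjugacy of the products can be propagated backwards
  along the cycle, starting from w b = h, and telescoping forces w a = h, so the chain closes.
  Hence the classes of \<phi> correspond to tuples of classes of the block composites, and the
  numbers of classes multiply in \<nat> \<union> {\<infinity>}.
\<close>

definition ecard :: "'a set \<Rightarrow> enat" where
  "ecard A = (if finite A then enat (card A) else \<infinity>)"

lemma reidemeister_ecard: "reidemeister G \<psi> = ecard (carrier G // twisted_conj G \<psi>)"
  by (simp add: reidemeister_def ecard_def)

lemma ecard_empty [simp]: "ecard {} = 0"
  by (simp add: ecard_def zero_enat_def)

lemma ecard_image: "inj_on f A \<Longrightarrow> ecard (f ` A) = ecard A"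
  by (simp add: ecard_def card_image finite_image_iff)

lemma ecard_Times: "ecard (A \<times> B) = ecard A * ecard B"
proof (cases "A = {} \<or> B = {}")
  case False
  then show ?thesis
    by (auto simp: ecard_def card_cartesian_product finite_cartesian_product_iff zero_enat_def)
qed auto

lemma ecard_PiE: "finite J \<Longrightarrow> ecard (PiE J B) = (\<Prod>j\<in>J. ecard (B j))"
proof (induction J rule: finite_induct)
  case empty
  then show ?case by (simp add: ecard_def one_enat_def)
next
  case (insert j J)
  then show ?case
    by (simp add: PiE_insert_eq ecard_image inj_combinator ecard_Times)
qed

lemma ecard_quotient_kernel:
  assumes "R \<subseteq> A \<times> A" and "\<And>x y. x \<in> A \<Longrightarrow> y \<in> A \<Longrightarrow> (x, y) \<in> R \<longleftrightarrow> h x = h y"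
  shows "ecard (A // R) = ecard (h ` A)"
proof -
  define fibre where "fibre v = {x \<in> A. h x = v}" for v
  have "R `` {x} = fibre (h x)" if "x \<in> A" for x
    using assms that unfolding fibre_def by auto
  then have "A // R = fibre ` h ` A"
    unfolding quotient_def by auto
  moreover have "inj_on fibre (h ` A)"
    unfolding inj_on_def fibre_def by blast
  ultimately show ?thesis
    by (simp add: ecard_image)
qed

lemma image_classes_PiE:
  assumes F: "F ` A = PiE J B" and eqv: "\<And>j. j \<in> J \<Longrightarrow> equiv (B j) (S j)"
  shows "(\<lambda>x. \<lambda>j\<in>J. S j `` {F x j}) ` A = PiE J (\<lambda>j. B j // S j)"
proof
  have "F x j \<in> B j" if "x \<in> A" "j \<in> J" for x j
    using F that by (blast intro: PiE_mem)
  then show "(\<lambda>x. \<lambda>j\<in>J. S j `` {F x j}) ` A \<subseteq> PiE J (\<lambda>j. B j // S j)"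
    by (auto intro!: quotientI)
next
  show "PiE J (\<lambda>j. B j // S j) \<subseteq> (\<lambda>x. \<lambda>j\<in>J. S j `` {F x j}) ` A"
  proof
    fix Q assume Q: "Q \<in> PiE J (\<lambda>j. B j // S j)"
    then have "\<forall>j\<in>J. \<exists>b. b \<in> B j \<and> Q j = S j `` {b}"
      by (auto elim!: quotientE)
    then obtain rep where rep: "\<And>j. j \<in> J \<Longrightarrow> rep j \<in> B j \<and> Q j = S j `` {rep j}"
      by metis
    then have "restrict rep J \<in> F ` A"
      using F by auto
    then obtain x where x: "x \<in> A" "F x = restrict rep J"
      by auto
    have "(\<lambda>j\<in>J. S j `` {F x j}) = Q"
      using Q rep x by (auto simp: PiE_iff extensional_def fun_eq_iff)
    then show "Q \<in> (\<lambda>x. \<lambda>j\<in>J. S j `` {F x j}) ` A"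
      using x(1) by (rule image_eqI[OF sym])
  qed
qed

lemma ecard_quotient_product:
  assumes fin: "finite J" and F: "F ` A = PiE J B" and R: "R \<subseteq> A \<times> A"
    and eqv: "\<And>j. j \<in> J \<Longrightarrow> equiv (B j) (S j)"
    and rel: "\<And>x y. x \<in> A \<Longrightarrow> y \<in> A \<Longrightarrow> (x, y) \<in> R \<longleftrightarrow> (\<forall>j\<in>J. (F x j, F y j) \<in> S j)"
  shows "ecard (A // R) = (\<Prod>j\<in>J. ecard (B j // S j))"
proof -
  define h where "h x = (\<lambda>j\<in>J. S j `` {F x j})" for x
  have FB: "F x j \<in> B j" if "x \<in> A" "j \<in> J" for x j
    using F that by (blast intro: PiE_mem)
  have "(x, y) \<in> R \<longleftrightarrow> h x = h y" if "x \<in> A" "y \<in> A" for x y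
  proof -
    have "h x = h y \<longleftrightarrow> (\<forall>j\<in>J. S j `` {F x j} = S j `` {F y j})"
      unfolding h_def fun_eq_iff restrict_def by (auto split: if_splits)
    also have "\<dots> \<longleftrightarrow> (\<forall>j\<in>J. (F x j, F y j) \<in> S j)"
      using eq_equiv_class_iff[OF eqv] FB that by blast
    finally show ?thesis
      using rel that by simp
  qed
  then have "ecard (A // R) = ecard (h ` A)"
    by (rule ecard_quotient_kernel[OF R])
  also have "h ` A = PiE J (\<lambda>j. B j // S j)"
    unfolding h_def using F eqv by (rule image_classes_PiE)
  finally show ?thesis
    using fin by (simp add: ecard_PiE)
qed

definition ordered_prod :: "('a, 'b) monoid_scheme \<Rightarrow> (nat \<Rightarrow> 'a) \<Rightarrow> nat \<Rightarrow> nat \<Rightarrow> 'a" where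
  "ordered_prod G f a b = foldl (\<lambda>r q. r \<otimes>\<^bsub>G\<^esub> f q) \<one>\<^bsub>G\<^esub> [a..<b]"

lemma ordered_prod_empty [simp]: "ordered_prod G f a a = \<one>\<^bsub>G\<^esub>"
  by (simp add: ordered_prod_def)

lemma ordered_prod_Suc [simp]:
  "a \<le> b \<Longrightarrow> ordered_prod G f a (Suc b) = ordered_prod G f a b \<otimes>\<^bsub>G\<^esub> f b"
  by (simp add: ordered_prod_def)

lemma (in monoid) ordered_prod_closed:
  "a \<le> b \<Longrightarrow> (\<And>q. a \<le> q \<Longrightarrow> q < b \<Longrightarrow> f q \<in> carrier G) \<Longrightarrow> ordered_prod G f a b \<in> carrier G"
  by (induction b rule: dec_induct) auto

lemma (in monoid) ordered_prod_single:
  assumes "a < b" and "f a \<in> carrier G" and "\<And>q. a < q \<Longrightarrow> q < b \<Longrightarrow> f q = \<one>"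
  shows "ordered_prod G f a b = f a"
  using \<open>a < b\<close> [THEN Suc_leI] assms(2,3)
  by (induction b rule: dec_induct) auto

lemma foldr_comp_eq: "foldr (\<circ>) fs g = foldr (\<circ>) fs id \<circ> g"
  by (induction fs) auto

lemma block_comp_empty [simp]: "block_comp \<phi> c a a = id"
  by (simp add: block_comp_def)

lemma block_comp_Suc:
  "a \<le> q \<Longrightarrow> block_comp \<phi> c a (Suc q) = block_comp \<phi> c a q \<circ> \<phi> (c q)"
  unfolding block_comp_def by (simp add: foldr_append) (subst foldr_comp_eq, simp)

lemma block_comp_hom:
  "a \<le> b \<Longrightarrow> (\<And>q. a \<le> q \<Longrightarrow> q < b \<Longrightarrow> \<phi> (c q) \<in> hom G G) \<Longrightarrow> block_comp \<phi> c a b \<in> hom G G"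
proof (induction b rule: dec_induct)
  case base
  then show ?case by (simp add: hom_def)
next
  case (step n)
  then show ?case
    unfolding block_comp_Suc[OF step.hyps(1)] by (intro hom_compose[of _ G G]) auto
qed

definition cycle_prod ::
  "('a, 'b) monoid_scheme \<Rightarrow> (nat \<Rightarrow> 'a \<Rightarrow> 'a) \<Rightarrow> (nat \<Rightarrow> nat) \<Rightarrow> nat \<Rightarrow> nat \<Rightarrow> (nat \<Rightarrow> 'a) \<Rightarrow> 'a" where
  "cycle_prod G \<phi> c a b x = ordered_prod G (\<lambda>q. block_comp \<phi> c a q (x q)) a b"

definition twisted_chain :: "('a, 'b) monoid_scheme \<Rightarrow> (nat \<Rightarrow> 'a \<Rightarrow> 'a) \<Rightarrow> (nat \<Rightarrow> nat) \<Rightarrow>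
    nat \<Rightarrow> nat \<Rightarrow> (nat \<Rightarrow> 'a) \<Rightarrow> (nat \<Rightarrow> 'a) \<Rightarrow> (nat \<Rightarrow> 'a) \<Rightarrow> bool" where
  "twisted_chain G \<phi> c a b x y w \<longleftrightarrow> (\<forall>q\<in>{a..b}. w q \<in> carrier G) \<and>
     (\<forall>q\<in>{a..<b}. x q = w q \<otimes>\<^bsub>G\<^esub> y q \<otimes>\<^bsub>G\<^esub> inv\<^bsub>G\<^esub> (\<phi> (c q) (w (Suc q))))"

context group
begin

lemma inv_mult_cancel_left [simp]: "x \<in> carrier G \<Longrightarrow> y \<in> carrier G \<Longrightarrow> inv x \<otimes> (x \<otimes> y) = y"
  by (metis inv_closed l_inv l_one m_assoc)

lemma mult_inv_cancel_left [simp]: "x \<in> carrier G \<Longrightarrow> y \<in> carrier G \<Longrightarrow> x \<otimes> (inv x \<otimes> y) = y"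
  by (metis inv_closed r_inv l_one m_assoc)

lemma endo_inv: "h \<in> hom G G \<Longrightarrow> x \<in> carrier G \<Longrightarrow> h (inv x) = inv (h x)"
  by (rule group_hom.hom_inv) (auto simp: group_hom_def group_hom_axioms_def is_group)

lemma equiv_twisted_conj:
  assumes \<psi>: "\<psi> \<in> hom G G"
  shows "equiv (carrier G) (twisted_conj G \<psi>)"
proof (rule equivI)
  show "refl_on (carrier G) (twisted_conj G \<psi>)"
    using hom_one[OF \<psi> is_group is_group]
    by (auto simp: refl_on_def twisted_conj_def intro!: bexI[of _ \<one>])
next
  show "sym (twisted_conj G \<psi>)"
  proof (rule symI)
    fix x y assume "(x, y) \<in> twisted_conj G \<psi>"
    then obtain g where g: "g \<in> carrier G" and x: "x \<in> carrier G" and y: "y \<in> carrier G"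
      and xy: "x = g \<otimes> y \<otimes> inv (\<psi> g)"
      by (auto simp: twisted_conj_def)
    have "y = inv g \<otimes> x \<otimes> inv (\<psi> (inv g))"
      using g y hom_in_carrier[OF \<psi> g] by (simp add: xy endo_inv[OF \<psi>] m_assoc)
    then show "(y, x) \<in> twisted_conj G \<psi>"
      using g x y unfolding twisted_conj_def by (auto intro!: bexI[of _ "inv g"])
  qed
next
  show "trans (twisted_conj G \<psi>)"
  proof (rule transI)
    fix x y z assume "(x, y) \<in> twisted_conj G \<psi>" "(y, z) \<in> twisted_conj G \<psi>"
    then obtain g h where g: "g \<in> carrier G" and h: "h \<in> carrier G"
      and x: "x \<in> carrier G" and z: "z \<in> carrier G"
      and xy: "x = g \<otimes> y \<otimes> inv (\<psi> g)" and yz: "y = h \<otimes> z \<otimes> inv (\<psi> h)"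
      by (auto simp: twisted_conj_def)
    have "x = (g \<otimes> h) \<otimes> z \<otimes> inv (\<psi> (g \<otimes> h))"
      using g h z hom_in_carrier[OF \<psi>]
      by (simp add: xy yz hom_mult[OF \<psi>] inv_mult_group m_assoc)
    then show "(x, z) \<in> twisted_conj G \<psi>"
      using g h x z unfolding twisted_conj_def by (auto intro!: bexI[of _ "g \<otimes> h"])
  qed
qed (auto simp: twisted_conj_def)

lemma twisted_chain_exists:
  assumes "\<And>q. a \<le> q \<Longrightarrow> q < b \<Longrightarrow> \<phi> (c q) \<in> hom G G"
    and "\<And>q. a \<le> q \<Longrightarrow> q < b \<Longrightarrow> x q \<in> carrier G"
    and "\<And>q. a \<le> q \<Longrightarrow> q < b \<Longrightarrow> y q \<in> carrier G"
    and "h \<in> carrier G"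
  shows "\<exists>w. twisted_chain G \<phi> c a b x y w \<and> w b = h"
  using assms
proof (induction "b - a" arbitrary: a)
  case 0
  then show ?case
    by (intro exI[of _ "\<lambda>_. h"]) (auto simp: twisted_chain_def)
next
  case (Suc d)
  have "a < b"
    using Suc.hyps(2) by arith
  have "d = b - Suc a"
    using Suc.hyps(2) by arith
  then have "\<exists>w. twisted_chain G \<phi> c (Suc a) b x y w \<and> w b = h"
    by (rule Suc.hyps(1)) (use Suc.prems in auto)
  then obtain w where w: "twisted_chain G \<phi> c (Suc a) b x y w" "w b = h"
    by blast
  define w' where "w' = w(a := x a \<otimes> \<phi> (c a) (w (Suc a)) \<otimes> inv (y a))"
  have wa: "w (Suc a) \<in> carrier G"
    using w(1) \<open>a < b\<close> by (simp add: twisted_chain_def)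
  then have \<phi>wa: "\<phi> (c a) (w (Suc a)) \<in> carrier G"
    using Suc.prems(1)[of a] \<open>a < b\<close> by (simp add: hom_in_carrier)
  have xa: "x a \<in> carrier G" and ya: "y a \<in> carrier G"
    using Suc.prems(2,3)[of a] \<open>a < b\<close> by auto
  have "w' q \<in> carrier G" if "q \<in> {a..b}" for q
    using that w(1) xa ya \<phi>wa by (cases "q = a") (auto simp: twisted_chain_def w'_def)
  moreover have "x q = w' q \<otimes> y q \<otimes> inv (\<phi> (c q) (w' (Suc q)))" if "q \<in> {a..<b}" for q
  proof (cases "q = a")
    case True
    then show ?thesis
      using xa ya \<phi>wa by (simp add: w'_def m_assoc)
  next
    case False
    then show ?thesis
      using that w(1) by (simp add: twisted_chain_def w'_def)
  qed
  moreover have "w' b = h"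
    using w(2) \<open>a < b\<close> by (simp add: w'_def)
  ultimately show ?case
    unfolding twisted_chain_def by blast
qed

context
  fixes \<phi> :: "nat \<Rightarrow> 'a \<Rightarrow> 'a" and c :: "nat \<Rightarrow> nat" and a b :: nat
  assumes endos: "\<And>q. a \<le> q \<Longrightarrow> q < b \<Longrightarrow> \<phi> (c q) \<in> hom G G"
begin

lemma cycle_prod_closed:
  "a \<le> b \<Longrightarrow> (\<And>q. a \<le> q \<Longrightarrow> q < b \<Longrightarrow> x q \<in> carrier G) \<Longrightarrow> cycle_prod G \<phi> c a b x \<in> carrier G"
  unfolding cycle_prod_def
  by (intro ordered_prod_closed hom_in_carrier[OF block_comp_hom]) (auto intro: endos)

lemma twisted_chain_telescope:
  assumes "a \<le> b" and y: "\<And>q. a \<le> q \<Longrightarrow> q < b \<Longrightarrow> y q \<in> carrier G"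
    and chain: "twisted_chain G \<phi> c a b x y w"
  shows "cycle_prod G \<phi> c a b x = w a \<otimes> cycle_prod G \<phi> c a b y \<otimes> inv (block_comp \<phi> c a b (w b))"
  using \<open>a \<le> b\<close> unfolding cycle_prod_def
proof (induction b rule: dec_induct)
  case base
  have "w a \<in> carrier G"
    using chain assms(1) by (simp add: twisted_chain_def)
  then show ?case
    by simp
next
  case (step n)
  let ?\<Psi> = "block_comp \<phi> c a"
  have \<Psi>: "?\<Psi> n \<in> hom G G"
    using step.hyps by (intro block_comp_hom) (auto intro: endos)
  have w: "w n \<in> carrier G" "w (Suc n) \<in> carrier G" and x: "x n = w n \<otimes> y n \<otimes> inv (\<phi> (c n) (w (Suc n)))"
    using chain step.hyps by (auto simp: twisted_chain_def)
  have \<phi>w: "\<phi> (c n) (w (Suc n)) \<in> carrier G"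
    using hom_in_carrier[OF endos w(2)] step.hyps by auto
  have "?\<Psi> n (x n) = ?\<Psi> n (w n) \<otimes> ?\<Psi> n (y n) \<otimes> inv (?\<Psi> (Suc n) (w (Suc n)))"
    using step.hyps w y \<phi>w by (simp add: x block_comp_Suc hom_mult[OF \<Psi>] endo_inv[OF \<Psi>])
  moreover have "ordered_prod G (\<lambda>q. ?\<Psi> q (y q)) a n \<in> carrier G"
    using step.hyps y by (intro ordered_prod_closed hom_in_carrier[OF block_comp_hom]) (auto intro: endos)
  moreover have "?\<Psi> (Suc n) (w (Suc n)) \<in> carrier G"
    using step.hyps w by (intro hom_in_carrier[OF block_comp_hom]) (auto intro: endos)
  ultimately show ?case
    using step w y[of n] hom_in_carrier[OF \<Psi>] chain by (simp add: m_assoc twisted_chain_def)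
qed

lemma twisted_conj_cycle_prod_iff:
  assumes "a \<le> b"
    and x: "\<And>q. a \<le> q \<Longrightarrow> q < b \<Longrightarrow> x q \<in> carrier G"
    and y: "\<And>q. a \<le> q \<Longrightarrow> q < b \<Longrightarrow> y q \<in> carrier G"
  shows "(cycle_prod G \<phi> c a b x, cycle_prod G \<phi> c a b y) \<in> twisted_conj G (block_comp \<phi> c a b)
    \<longleftrightarrow> (\<exists>w. twisted_chain G \<phi> c a b x y w \<and> w b = w a)"
proof
  assume "(cycle_prod G \<phi> c a b x, cycle_prod G \<phi> c a b y) \<in> twisted_conj G (block_comp \<phi> c a b)"
  then obtain h where h: "h \<in> carrier G"
    and xy: "cycle_prod G \<phi> c a b x = h \<otimes> cycle_prod G \<phi> c a b y \<otimes> inv (block_comp \<phi> c a b h)"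
    by (auto simp: twisted_conj_def)
  obtain w where w: "twisted_chain G \<phi> c a b x y w" "w b = h"
    using twisted_chain_exists[where \<phi> = \<phi> and c = c and x = x and y = y, OF endos x y h] by blast
  have "w a \<otimes> cycle_prod G \<phi> c a b y \<otimes> inv (block_comp \<phi> c a b h)
      = h \<otimes> cycle_prod G \<phi> c a b y \<otimes> inv (block_comp \<phi> c a b h)"
    using twisted_chain_telescope[OF assms(1) y w(1)] xy w(2) by simp
  moreover have "w a \<in> carrier G"
    using w(1) assms(1) by (simp add: twisted_chain_def)
  moreover have "cycle_prod G \<phi> c a b y \<in> carrier G"
    using cycle_prod_closed[where x = y, OF assms(1) y] .
  moreover have "block_comp \<phi> c a b h \<in> carrier G"
    using hom_in_carrier[OF block_comp_hom[where \<phi> = \<phi> and c = c, OF assms(1) endos] h] .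
  ultimately have "w a = h"
    using h by simp
  with w show "\<exists>w. twisted_chain G \<phi> c a b x y w \<and> w b = w a"
    by auto
next
  assume "\<exists>w. twisted_chain G \<phi> c a b x y w \<and> w b = w a"
  then obtain w where w: "twisted_chain G \<phi> c a b x y w" "w b = w a"
    by blast
  have "w a \<in> carrier G"
    using w(1) assms(1) by (simp add: twisted_chain_def)
  moreover have "cycle_prod G \<phi> c a b x = w a \<otimes> cycle_prod G \<phi> c a b y \<otimes> inv (block_comp \<phi> c a b (w a))"
    using twisted_chain_telescope[OF assms(1) y w(1)] w(2) by simp
  ultimately show "(cycle_prod G \<phi> c a b x, cycle_prod G \<phi> c a b y) \<in> twisted_conj G (block_comp \<phi> c a b)"
    using cycle_prod_closed[where x = x, OF assms(1) x] cycle_prod_closed[where x = y, OF assms(1) y]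
    unfolding twisted_conj_def by blast
qed

end

end

lemma (in group) twisted_perm_endo_closed:
  assumes "\<And>i. i < n \<Longrightarrow> \<phi> i \<in> hom G G" and "\<And>i. i < n \<Longrightarrow> \<sigma> i < n"
    and "g \<in> carrier (product_group {0..<n} (\<lambda>_. G))"
  shows "twisted_perm_endo n \<phi> \<sigma> g \<in> carrier (product_group {0..<n} (\<lambda>_. G))"
proof -
  have "\<phi> i (g (\<sigma> i)) \<in> carrier G" if "i < n" for i
    using hom_in_carrier[OF assms(1)[OF that]] assms(2)[OF that] assms(3) by (auto simp: PiE_iff)
  then show ?thesis
    by (auto simp: twisted_perm_endo_def)
qed

lemma (in group) twisted_conj_twisted_perm_endo_iff:
  assumes endo: "\<And>i. i < n \<Longrightarrow> \<phi> i \<in> hom G G" and \<sigma>: "\<And>i. i < n \<Longrightarrow> \<sigma> i < n"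
    and x: "x \<in> carrier (product_group {0..<n} (\<lambda>_. G))"
    and y: "y \<in> carrier (product_group {0..<n} (\<lambda>_. G))"
  shows "(x, y) \<in> twisted_conj (product_group {0..<n} (\<lambda>_. G)) (twisted_perm_endo n \<phi> \<sigma>) \<longleftrightarrow>
    (\<exists>g\<in>carrier (product_group {0..<n} (\<lambda>_. G)). \<forall>i<n. x i = g i \<otimes> y i \<otimes> inv (\<phi> i (g (\<sigma> i))))"
proof -
  let ?P = "product_group {0..<n} (\<lambda>_. G)"
  have "x = g \<otimes>\<^bsub>?P\<^esub> y \<otimes>\<^bsub>?P\<^esub> inv\<^bsub>?P\<^esub> (twisted_perm_endo n \<phi> \<sigma> g) \<longleftrightarrow>
      (\<forall>i<n. x i = g i \<otimes> y i \<otimes> inv (\<phi> i (g (\<sigma> i))))" if g: "g \<in> carrier ?P" for g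
  proof -
    have "twisted_perm_endo n \<phi> \<sigma> g \<in> carrier ?P"
      using endo \<sigma> g by (rule twisted_perm_endo_closed)
    then have "inv\<^bsub>?P\<^esub> (twisted_perm_endo n \<phi> \<sigma> g) = (\<lambda>i\<in>{0..<n}. inv (\<phi> i (g (\<sigma> i))))"
      by (auto simp: is_group twisted_perm_endo_def intro!: restrict_ext)
    then show ?thesis
      using x by (auto simp: PiE_iff extensional_def fun_eq_iff)
  qed
  then show ?thesis
    using x y by (auto simp: twisted_conj_def)
qed

locale cycle_blocks =
  fixes n k :: nat and \<sigma> c m :: "nat \<Rightarrow> nat"
  assumes perm: "\<sigma> permutes {0..<n}"
    and c_bij: "bij_betw c {0..<n} {0..<n}"
    and m0: "m 0 = 0"
    and m_mono: "\<And>j. j < k \<Longrightarrow> m j < m (Suc j)"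
    and mk: "m k = n"
    and cycles: "\<And>j p. j \<in> {1..k} \<Longrightarrow> m (j - 1) \<le> p \<Longrightarrow> p < m j \<Longrightarrow>
                   \<sigma> (c p) = (if Suc p < m j then c (Suc p) else c (m (j - 1)))"
begin

lemma \<sigma>_less: "i < n \<Longrightarrow> \<sigma> i < n"
  using permutes_in_image[OF perm] by simp

lemma c_less: "q < n \<Longrightarrow> c q < n"
  using bij_betwE[OF c_bij] by simp

lemma inv_c_less: "i < n \<Longrightarrow> inv_into {0..<n} c i < n"
  using bij_betwE[OF bij_betw_inv_into[OF c_bij]] by simp

lemma inv_c_c [simp]: "q < n \<Longrightarrow> inv_into {0..<n} c (c q) = q"
  using bij_betw_inv_into_left[OF c_bij] by simp

lemma c_inv_c [simp]: "i < n \<Longrightarrow> c (inv_into {0..<n} c i) = i"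
  using bij_betw_inv_into_right[OF c_bij] by simp

lemma m_le: "j \<le> j' \<Longrightarrow> j' \<le> k \<Longrightarrow> m j \<le> m j'"
proof (induction j' rule: dec_induct)
  case (step i)
  then show ?case
    using m_mono[of i] by simp
qed simp

lemma block_nonempty: "j \<in> {1..k} \<Longrightarrow> m (j - 1) < m j"
  using m_mono[of "j - 1"] by (cases j) auto

lemma block_less: "j \<in> {1..k} \<Longrightarrow> q < m j \<Longrightarrow> q < n"
  using m_le[of j k] mk by simp

definition block_of :: "nat \<Rightarrow> nat" where
  "block_of q = (LEAST j. q < m j)"

lemma block_of_eq:
  assumes j: "j \<in> {1..k}" and q: "m (j - 1) \<le> q" "q < m j"
  shows "block_of q = j"
  unfolding block_of_def
proof (rule Least_equality)
  fix j' assume "q < m j'"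
  show "j \<le> j'"
  proof (rule ccontr)
    assume "\<not> j \<le> j'"
    then have "m j' \<le> m (j - 1)"
      using j by (intro m_le) auto
    with \<open>q < m j'\<close> q(1) show False
      by simp
  qed
qed (fact q(2))

lemma block_of_bounds:
  assumes "q < n"
  shows "block_of q \<in> {1..k} \<and> m (block_of q - 1) \<le> q \<and> q < m (block_of q)"
proof -
  have "q < m (block_of q)"
    unfolding block_of_def using assms mk by (metis LeastI)
  moreover have "block_of q \<le> k"
    unfolding block_of_def using assms mk by (metis Least_le)
  moreover have "block_of q \<noteq> 0"
    using calculation(1) m0 by (metis less_zeroE)
  moreover have "\<not> q < m (block_of q - 1)"
    using calculation(3) not_less_Least[of "block_of q - 1" "\<lambda>j. q < m j"] by (simp add: block_of_def)
  ultimately show ?thesis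
    by auto
qed

end

locale twisted_cycle_blocks = cycle_blocks + group G for G :: "('a, 'b) monoid_scheme" (structure) +
  fixes \<phi> :: "nat \<Rightarrow> 'a \<Rightarrow> 'a"
  assumes endo: "\<And>i. i < n \<Longrightarrow> \<phi> i \<in> hom G G"
begin

abbreviation Gn :: "(nat \<Rightarrow> 'a) monoid" where
  "Gn \<equiv> product_group {0..<n} (\<lambda>_. G)"

lemma block_endo: "j \<in> {1..k} \<Longrightarrow> m (j - 1) \<le> q \<Longrightarrow> q < m j \<Longrightarrow> \<phi> (c q) \<in> hom G G"
  using block_less endo c_less by blast

lemma partial_block_comp_endo:
  "j \<in> {1..k} \<Longrightarrow> m (j - 1) \<le> q \<Longrightarrow> q \<le> m j \<Longrightarrow> block_comp \<phi> c (m (j - 1)) q \<in> hom G G"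
  using block_endo by (intro block_comp_hom) auto

lemma block_comp_endo: "j \<in> {1..k} \<Longrightarrow> block_comp \<phi> c (m (j - 1)) (m j) \<in> hom G G"
  using block_nonempty partial_block_comp_endo by (simp add: less_imp_le)

lemma block_entry_closed: "x \<in> carrier Gn \<Longrightarrow> j \<in> {1..k} \<Longrightarrow> q < m j \<Longrightarrow> x (c q) \<in> carrier G"
  using block_less c_less by (auto simp: PiE_iff)

lemma block_chain_of_twisted_conj:
  assumes j: "j \<in> {1..k}" and g: "g \<in> carrier Gn"
    and xy: "\<And>i. i < n \<Longrightarrow> x i = g i \<otimes> y i \<otimes> inv (\<phi> i (g (\<sigma> i)))"
  shows "twisted_chain G \<phi> c (m (j - 1)) (m j) (\<lambda>q. x (c q)) (\<lambda>q. y (c q))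
    (\<lambda>q. g (c (if q < m j then q else m (j - 1))))"
proof -
  have "\<sigma> (c q) = c (if Suc q < m j then Suc q else m (j - 1))" if "m (j - 1) \<le> q" "q < m j" for q
    using cycles[OF j that] by simp
  then show ?thesis
    using block_nonempty[OF j] block_entry_closed[OF g j] xy block_less[OF j] c_less
    unfolding twisted_chain_def by auto
qed

lemma twisted_conj_of_block_chains:
  assumes W: "\<And>j. j \<in> {1..k} \<Longrightarrow>
      twisted_chain G \<phi> c (m (j - 1)) (m j) (\<lambda>q. x (c q)) (\<lambda>q. y (c q)) (W j) \<and> W j (m j) = W j (m (j - 1))"
  shows "\<exists>g\<in>carrier Gn. \<forall>i<n. x i = g i \<otimes> y i \<otimes> inv (\<phi> i (g (\<sigma> i)))"
proof
  define g where "g = (\<lambda>i\<in>{0..<n}. W (block_of (inv_into {0..<n} c i)) (inv_into {0..<n} c i))"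
  have gc: "g (c q) = W j q" if "j \<in> {1..k}" "m (j - 1) \<le> q" "q < m j" for j q
    using block_less[OF that(1,3)] c_less block_of_eq[OF that] unfolding g_def by auto
  have "W (block_of q) q \<in> carrier G" if "q < n" for q
    using W[of "block_of q"] block_of_bounds[OF that] unfolding twisted_chain_def by auto
  then show "g \<in> carrier Gn"
    using inv_c_less unfolding g_def by auto
  show "\<forall>i<n. x i = g i \<otimes> y i \<otimes> inv (\<phi> i (g (\<sigma> i)))"
  proof (intro allI impI)
    fix i assume "i < n"
    define q where "q = inv_into {0..<n} c i"
    define j where "j = block_of q"
    have i: "i = c q"
      unfolding q_def using \<open>i < n\<close> by simp
    have q: "j \<in> {1..k}" "m (j - 1) \<le> q" "q < m j"
      using block_of_bounds inv_c_less \<open>i < n\<close> unfolding q_def j_def by auto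
    have "g (\<sigma> i) = W j (Suc q)"
    proof (cases "Suc q < m j")
      case True
      then show ?thesis
        using cycles[OF q] gc[OF q(1), of "Suc q"] q(2) unfolding i by simp
    next
      case False
      then have "Suc q = m j"
        using q(3) by simp
      then show ?thesis
        using cycles[OF q] gc[OF q(1), of "m (j - 1)"] W[OF q(1)] block_nonempty[OF q(1)] unfolding i by simp
    qed
    then show "x i = g i \<otimes> y i \<otimes> inv (\<phi> i (g (\<sigma> i)))"
      using W[OF q(1)] q gc[OF q] unfolding i twisted_chain_def by auto
  qed
qed

definition block_prods :: "(nat \<Rightarrow> 'a) \<Rightarrow> nat \<Rightarrow> 'a" where
  "block_prods x = (\<lambda>j\<in>{1..k}. cycle_prod G \<phi> c (m (j - 1)) (m j) (\<lambda>q. x (c q)))"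

lemma block_prods_apply:
  "j \<in> {1..k} \<Longrightarrow> block_prods x j = cycle_prod G \<phi> c (m (j - 1)) (m j) (\<lambda>q. x (c q))"
  by (simp add: block_prods_def)

lemma twisted_conj_iff_block_chains:
  assumes x: "x \<in> carrier Gn" and y: "y \<in> carrier Gn"
  shows "(x, y) \<in> twisted_conj Gn (twisted_perm_endo n \<phi> \<sigma>) \<longleftrightarrow>
    (\<forall>j\<in>{1..k}. \<exists>w. twisted_chain G \<phi> c (m (j - 1)) (m j) (\<lambda>q. x (c q)) (\<lambda>q. y (c q)) w \<and>
       w (m j) = w (m (j - 1)))"
    (is "_ \<longleftrightarrow> (\<forall>j\<in>{1..k}. \<exists>w. ?closed_chain j w)")
proof -
  have conj_iff: "(x, y) \<in> twisted_conj Gn (twisted_perm_endo n \<phi> \<sigma>) \<longleftrightarrow>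
      (\<exists>g\<in>carrier Gn. \<forall>i<n. x i = g i \<otimes> y i \<otimes> inv (\<phi> i (g (\<sigma> i))))"
    by (rule twisted_conj_twisted_perm_endo_iff) (use endo \<sigma>_less x y in auto)
  show ?thesis
  proof
    assume "(x, y) \<in> twisted_conj Gn (twisted_perm_endo n \<phi> \<sigma>)"
    then obtain g where g: "g \<in> carrier Gn" and xy: "\<And>i. i < n \<Longrightarrow> x i = g i \<otimes> y i \<otimes> inv (\<phi> i (g (\<sigma> i)))"
      using conj_iff by auto
    show "\<forall>j\<in>{1..k}. \<exists>w. ?closed_chain j w"
    proof
      fix j assume j: "j \<in> {1..k}"
      let ?w = "\<lambda>q. g (c (if q < m j then q else m (j - 1)))"
      have "twisted_chain G \<phi> c (m (j - 1)) (m j) (\<lambda>q. x (c q)) (\<lambda>q. y (c q)) ?w"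
        using j g xy by (rule block_chain_of_twisted_conj)
      moreover have "?w (m j) = ?w (m (j - 1))"
        using block_nonempty[OF j] by simp
      ultimately show "\<exists>w. ?closed_chain j w"
        by blast
    qed
  next
    assume "\<forall>j\<in>{1..k}. \<exists>w. ?closed_chain j w"
    then have "\<exists>W. \<forall>j\<in>{1..k}. ?closed_chain j (W j)"
      by (rule bchoice)
    then obtain W where W: "\<forall>j\<in>{1..k}. ?closed_chain j (W j)"
      by blast
    have "\<exists>g\<in>carrier Gn. \<forall>i<n. x i = g i \<otimes> y i \<otimes> inv (\<phi> i (g (\<sigma> i)))"
      by (rule twisted_conj_of_block_chains[where W = W]) (use W in blast)
    then show "(x, y) \<in> twisted_conj Gn (twisted_perm_endo n \<phi> \<sigma>)"
      using conj_iff by blast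
  qed
qed

lemma twisted_conj_iff_block_prods:
  assumes x: "x \<in> carrier Gn" and y: "y \<in> carrier Gn"
  shows "(x, y) \<in> twisted_conj Gn (twisted_perm_endo n \<phi> \<sigma>) \<longleftrightarrow>
    (\<forall>j\<in>{1..k}. (block_prods x j, block_prods y j) \<in> twisted_conj G (block_comp \<phi> c (m (j - 1)) (m j)))"
proof -
  have "(block_prods x j, block_prods y j) \<in> twisted_conj G (block_comp \<phi> c (m (j - 1)) (m j)) \<longleftrightarrow>
      (\<exists>w. twisted_chain G \<phi> c (m (j - 1)) (m j) (\<lambda>q. x (c q)) (\<lambda>q. y (c q)) w \<and> w (m j) = w (m (j - 1)))"
    if j: "j \<in> {1..k}" for j
    unfolding block_prods_apply[OF j]
    by (rule twisted_conj_cycle_prod_iff)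
      (use block_endo[OF j] less_imp_le[OF block_nonempty[OF j]]
        block_entry_closed[OF x j] block_entry_closed[OF y j] in auto)
  then show ?thesis
    using twisted_conj_iff_block_chains[OF x y] by simp
qed

lemma block_prods_closed:
  assumes x: "x \<in> carrier Gn" and j: "j \<in> {1..k}"
  shows "block_prods x j \<in> carrier G"
  unfolding block_prods_apply[OF j]
  by (rule cycle_prod_closed)
    (use block_endo[OF j] less_imp_le[OF block_nonempty[OF j]] block_entry_closed[OF x j] in auto)

lemma block_prods_surj:
  assumes z: "z \<in> PiE {1..k} (\<lambda>_. carrier G)"
  shows "\<exists>x\<in>carrier Gn. block_prods x = z"
proof
  define x where "x = (\<lambda>i\<in>{0..<n}. let q = inv_into {0..<n} c i in
      if q = m (block_of q - 1) then z (block_of q) else \<one>)"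
  have xc: "x (c q) = (if q = m (j - 1) then z j else \<one>)" if "j \<in> {1..k}" "m (j - 1) \<le> q" "q < m j" for j q
    using block_less[OF that(1,3)] c_less block_of_eq[OF that] unfolding x_def by auto
  have "block_prods x j = z j" if j: "j \<in> {1..k}" for j
  proof -
    have "cycle_prod G \<phi> c (m (j - 1)) (m j) (\<lambda>q. x (c q)) =
        block_comp \<phi> c (m (j - 1)) (m (j - 1)) (x (c (m (j - 1))))"
      unfolding cycle_prod_def
    proof (rule ordered_prod_single)
      show "m (j - 1) < m j"
        using j by (rule block_nonempty)
      show "block_comp \<phi> c (m (j - 1)) (m (j - 1)) (x (c (m (j - 1)))) \<in> carrier G"
        using xc[OF j, of "m (j - 1)"] block_nonempty[OF j] PiE_mem[OF z j] by simp
      show "block_comp \<phi> c (m (j - 1)) q (x (c q)) = \<one>" if "m (j - 1) < q" "q < m j" for q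
        using xc[OF j, of q] that hom_one[OF partial_block_comp_endo[OF j] is_group is_group]
        by simp
    qed
    then show ?thesis
      using xc[OF j, of "m (j - 1)"] block_nonempty[OF j] by (simp add: block_prods_apply[OF j])
  qed
  then show "block_prods x = z"
    using z by (auto simp: block_prods_def fun_eq_iff PiE_iff extensional_def)
  show "x \<in> carrier Gn"
    using z block_of_bounds inv_c_less unfolding x_def by (auto simp: PiE_iff Let_def)
qed

lemma block_prods_image: "block_prods ` carrier Gn = PiE {1..k} (\<lambda>_. carrier G)"
proof
  show "block_prods ` carrier Gn \<subseteq> PiE {1..k} (\<lambda>_. carrier G)"
    using block_prods_closed by (auto simp: block_prods_def)
  show "PiE {1..k} (\<lambda>_. carrier G) \<subseteq> block_prods ` carrier Gn"
    using block_prods_surj by (auto simp: image_iff)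
qed

lemma reidemeister_twisted_perm_endo:
  "reidemeister Gn (twisted_perm_endo n \<phi> \<sigma>) = (\<Prod>j\<in>{1..k}. reidemeister G (block_comp \<phi> c (m (j - 1)) (m j)))"
  unfolding reidemeister_ecard
proof (rule ecard_quotient_product[OF _ block_prods_image])
  show "twisted_conj Gn (twisted_perm_endo n \<phi> \<sigma>) \<subseteq> carrier Gn \<times> carrier Gn"
    by (auto simp: twisted_conj_def)
  show "equiv (carrier G) (twisted_conj G (block_comp \<phi> c (m (j - 1)) (m j)))" if "j \<in> {1..k}" for j
    using block_comp_endo[OF that] by (rule equiv_twisted_conj)
qed (simp_all add: twisted_conj_iff_block_prods)

end

theorem mainTheorem5:
  fixes G :: "('a, 'b) monoid_scheme"
    and n k :: nat
    and \<phi> :: "nat \<Rightarrow> 'a \<Rightarrow> 'a"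
    and \<sigma> c m :: "nat \<Rightarrow> nat"
  assumes grp: "group G"
    and n: "n \<ge> 1"
    and endo: "\<And>i. i < n \<Longrightarrow> \<phi> i \<in> hom G G"
    and perm: "\<sigma> permutes {0..<n}"
    and c_bij: "bij_betw c {0..<n} {0..<n}"
    and m0: "m 0 = 0"
    and m_mono: "\<And>j. j < k \<Longrightarrow> m j < m (Suc j)"
    and mk: "m k = n"
    and cycles: "\<And>j p. j \<in> {1..k} \<Longrightarrow> m (j - 1) \<le> p \<Longrightarrow> p < m j \<Longrightarrow>
                   \<sigma> (c p) = (if Suc p < m j then c (Suc p) else c (m (j - 1)))"
  shows "reidemeister (product_group {0..<n} (\<lambda>_. G)) (twisted_perm_endo n \<phi> \<sigma>)
         = (\<Prod>j\<in>{1..k}. reidemeister G (block_comp \<phi> c (m (j - 1)) (m j)))"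
proof -
  interpret twisted_cycle_blocks n k \<sigma> c m G \<phi>
    using grp endo perm c_bij m0 m_mono mk cycles
    by (simp add: twisted_cycle_blocks_def twisted_cycle_blocks_axioms_def cycle_blocks_def)
  show ?thesis
    by (rule reidemeister_twisted_perm_endo)
qed

end
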